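(* Every cutoff is a rational number.
   Context: For a real number $\alpha\ge 1$, define the integer sequence $(P^\alpha_i)_{i\ge 0}$ by $P^\alpha_0=0$, $P^\alpha_1=1$, and for $k\ge 1$, $P^\alpha_{k+1}=P^\alpha_k+P^\alpha_j$, where $j\ge1$ is the unique index with $\alpha P^\alpha_{j-1}<P^\alpha_k\le \alpha P^\alpha_j$. A cutoff is a real number $\alpha\ge 1$ such that for every real $\beta$ with $1\le\beta<\alpha$, the sequences $(P^\alpha_i)$ and $(P^\beta_i)$ are not identical. *)

theory Defs
  imports Complex_Main
begin

text \<open>For k >= 1, P_(k+1) = P_k + P_j where j >= 1 is the (unique) index with
  a * P_(j-1) < P_k <= a * P_j; only already-defined indices 1 <= j <= k are
  considered (for j > k the terms are not yet defined; and since the sequence is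
  nondecreasing and a >= 1, no j > k could satisfy the condition anyway).\<close>
fun Plist :: "real \<Rightarrow> nat \<Rightarrow> nat list" where
  "Plist a 0 = [0]"
| "Plist a (Suc 0) = [0, 1]"
| "Plist a (Suc (Suc k)) =
     (let xs = Plist a (Suc k);
          pk = xs ! Suc k;
          j = (THE j. 1 \<le> j \<and> j \<le> Suc k \<and>
                     a * real (xs ! (j - 1)) < real pk \<and> real pk \<le> a * real (xs ! j))
      in xs @ [pk + xs ! j])"

definition P :: "real \<Rightarrow> nat \<Rightarrow> nat" where
  "P a n = Plist a n ! n"

definition cutoff :: "real \<Rightarrow> bool" where
  "cutoff a \<longleftrightarrow> 1 \<le> a \<and> (\<forall>b. 1 \<le> b \<and> b < a \<longrightarrow> P a \<noteq> P b)"

end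

theory Submission
  imports Defs
begin

text \<open>
  Let \<open>j(k)\<close> be the index with \<open>P(k+1) = P(k) + P(j(k))\<close>. One has \<open>j(k+1) \<le> j(k) + 1\<close>, so the
  lag \<open>k - j(k)\<close> is nondecreasing; it is also bounded by \<open>\<alpha>\<^sup>2\<close>, because on \<open>[j(k), k]\<close> the
  sequence grows by at least \<open>P(j(k))/\<alpha>\<close> per step while \<open>P(k) \<le> \<alpha> P(j(k))\<close>. Hence eventually
  \<open>j(k+1) = j(k) + 1\<close>, and from then on the slack \<open>\<alpha> P(j(k)) - P(k)\<close> obeys the same additive
  recurrence as \<open>P(j(k))\<close>. For irrational \<open>\<alpha>\<close> the slack never vanishes, so it is at least
  \<open>c P(j(k))\<close> for some \<open>c > 0\<close>. Then every \<open>\<beta> < \<alpha>\<close> with \<open>\<beta> \<ge> max 1 (\<alpha> - c)\<close> accepts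
  all the indices chosen by \<open>\<alpha>\<close> and generates the same sequence, so \<open>\<alpha>\<close> is not a cutoff.
\<close>

definition is_rec_index :: "real \<Rightarrow> (nat \<Rightarrow> nat) \<Rightarrow> nat \<Rightarrow> nat \<Rightarrow> bool" where
  "is_rec_index a p k j \<longleftrightarrow>
     1 \<le> j \<and> j \<le> k \<and> a * real (p (j - 1)) < real (p k) \<and> real (p k) \<le> a * real (p j)"

lemma is_rec_index_unique:
  assumes "mono p" "0 \<le> a" "is_rec_index a p k i" "is_rec_index a p k j"
  shows "i = j"
proof -
  have False if "is_rec_index a p k u" "is_rec_index a p k v" "u < v" for u v
  proof -
    have "p u \<le> p (v - 1)" using \<open>mono p\<close> \<open>u < v\<close> by (simp add: monoD)
    then have "a * real (p u) \<le> a * real (p (v - 1))" using \<open>0 \<le> a\<close> by (simp add: mult_left_mono)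
    then show False using that unfolding is_rec_index_def by linarith
  qed
  then show ?thesis using assms(3,4) by (cases i j rule: linorder_cases) blast+
qed

lemma is_rec_index_cong:
  assumes "\<And>i. i \<le> k \<Longrightarrow> p i = q i"
  shows "is_rec_index a p k j \<longleftrightarrow> is_rec_index a q k j"
proof (cases "j \<le> k")
  case True
  then show ?thesis using assms[of j] assms[of "j - 1"] assms[of k] by (simp add: is_rec_index_def)
qed (simp add: is_rec_index_def)

lemma is_rec_index_le_param:
  assumes "is_rec_index a p k j" "b \<le> a" "real (p k) \<le> b * real (p j)"
  shows "is_rec_index b p k j"
proof -
  have "b * real (p (j - 1)) \<le> a * real (p (j - 1))" using \<open>b \<le> a\<close> by (simp add: mult_right_mono)
  then show ?thesis using assms unfolding is_rec_index_def by linarith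
qed

lemma Plist_Suc: "\<exists>x. Plist a (Suc n) = Plist a n @ [x]"
  by (cases n) (simp_all add: Let_def)

lemma length_Plist [simp]: "length (Plist a n) = Suc n"
proof (induction n)
  case (Suc n)
  then show ?case using Plist_Suc[of a n] by auto
qed simp

lemma nth_Plist: "i \<le> n \<Longrightarrow> Plist a n ! i = P a i"
proof (induction n arbitrary: i)
  case 0
  then show ?case by (simp add: P_def)
next
  case (Suc n)
  obtain x where "Plist a (Suc n) = Plist a n @ [x]" using Plist_Suc by blast
  with Suc show ?case by (cases "i = Suc n") (simp_all add: P_def nth_append)
qed

lemma P_0 [simp]: "P a 0 = 0" and P_1 [simp]: "P a 1 = 1"
  by (simp_all add: P_def)

lemma P_le_Suc: "P a n \<le> P a (Suc n)"
proof (cases n)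
  case (Suc k)
  then show ?thesis by (simp add: P_def Let_def nth_append)
qed (simp add: P_def)

lemma mono_P: "mono (P a)"
  by (simp add: P_le_Suc mono_iff_le_Suc)

lemma P_pos: "1 \<le> n \<Longrightarrow> 0 < P a n"
  using monoD[OF mono_P, of 1 n a] P_1[of a] by linarith

lemma P_Suc_if_is_rec_index:
  assumes "0 \<le> a" "is_rec_index a (P a) k j"
  shows "P a (Suc k) = P a k + P a j"
proof -
  obtain m where k: "k = Suc m" and "j \<le> k"
    using assms(2) unfolding is_rec_index_def by (cases k) auto
  let ?xs = "Plist a (Suc m)"
  have "(\<lambda>i. 1 \<le> i \<and> i \<le> Suc m \<and> a * real (?xs ! (i - 1)) < real (?xs ! Suc m)
              \<and> real (?xs ! Suc m) \<le> a * real (?xs ! i)) = is_rec_index a (P a) k"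
    by (intro ext) (simp add: k is_rec_index_def nth_Plist cong: conj_cong)
  moreover have "(THE i. is_rec_index a (P a) k i) = j"
    using is_rec_index_unique[OF mono_P \<open>0 \<le> a\<close>] assms(2) by blast
  ultimately have "Plist a (Suc k) = ?xs @ [?xs ! Suc m + ?xs ! j]"
    unfolding k Plist.simps(3) Let_def by (simp only:)
  then have "P a (Suc k) = ?xs ! Suc m + ?xs ! j"
    unfolding P_def by (simp add: k nth_append)
  then show ?thesis using \<open>j \<le> k\<close> by (simp add: k nth_Plist)
qed

definition rec_index :: "real \<Rightarrow> nat \<Rightarrow> nat" where
  "rec_index a k = (THE j. is_rec_index a (P a) k j)"

lemma is_rec_index_exists:
  assumes "1 \<le> a" "1 \<le> k"
  shows "\<exists>j. is_rec_index a (P a) k j"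
proof -
  define j where "j = (LEAST j. real (P a k) \<le> a * real (P a j))"
  have k: "real (P a k) \<le> a * real (P a k)"
    using mult_right_mono[OF \<open>1 \<le> a\<close>, of "real (P a k)"] by simp
  have j: "real (P a k) \<le> a * real (P a j)" "j \<le> k"
    unfolding j_def using k by (auto intro: LeastI Least_le)
  have "j \<noteq> 0"
  proof
    assume "j = 0"
    then show False using j(1) P_pos[OF \<open>1 \<le> k\<close>, of a] by simp
  qed
  then have "\<not> real (P a k) \<le> a * real (P a (j - 1))"
    unfolding j_def by (intro not_less_Least) simp
  with j \<open>j \<noteq> 0\<close> have "is_rec_index a (P a) k j"
    unfolding is_rec_index_def by simp
  then show ?thesis ..
qed

lemma is_rec_index_rec_index:
  assumes "1 \<le> a" "1 \<le> k"
  shows "is_rec_index a (P a) k (rec_index a k)"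
proof -
  have "\<exists>!j. is_rec_index a (P a) k j"
    using is_rec_index_exists[OF assms] is_rec_index_unique[OF mono_P, of a] \<open>1 \<le> a\<close> by auto
  then show ?thesis unfolding rec_index_def by (rule theI')
qed

lemma rec_index_bounds:
  assumes "1 \<le> a" "1 \<le> k"
  shows "1 \<le> rec_index a k" "rec_index a k \<le> k"
  using is_rec_index_rec_index[OF assms] by (simp_all add: is_rec_index_def)

lemma P_Suc:
  assumes "1 \<le> a" "1 \<le> k"
  shows "P a (Suc k) = P a k + P a (rec_index a k)"
  using assms by (intro P_Suc_if_is_rec_index is_rec_index_rec_index) simp_all

lemma rec_index_Suc_le:
  assumes "1 \<le> a" "1 \<le> k"
  shows "rec_index a (Suc k) \<le> Suc (rec_index a k)"
proof (rule ccontr)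
  let ?j = "rec_index a k" and ?j' = "rec_index a (Suc k)"
  assume "\<not> ?j' \<le> Suc ?j"
  have "1 \<le> ?j" using rec_index_bounds(1)[OF assms] .
  have "real (P a k) \<le> a * real (P a ?j)"
    using is_rec_index_rec_index[OF assms] by (simp add: is_rec_index_def)
  moreover have "real (P a ?j) \<le> a * real (P a (rec_index a ?j))"
    using is_rec_index_rec_index[OF \<open>1 \<le> a\<close> \<open>1 \<le> ?j\<close>] by (simp add: is_rec_index_def)
  ultimately have "real (P a (Suc k)) \<le> a * real (P a (Suc ?j))"
    by (simp add: P_Suc[OF assms] P_Suc[OF \<open>1 \<le> a\<close> \<open>1 \<le> ?j\<close>] distrib_left)
  also have "\<dots> \<le> a * real (P a (?j' - 1))"
    using \<open>\<not> ?j' \<le> Suc ?j\<close> \<open>1 \<le> a\<close> by (simp add: monoD[OF mono_P])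
  also have "\<dots> < real (P a (Suc k))"
    using is_rec_index_rec_index[OF \<open>1 \<le> a\<close>, of "Suc k"] by (simp add: is_rec_index_def)
  finally show False by simp
qed

lemma mono_lag:
  assumes "1 \<le> a"
  shows "mono (\<lambda>k. k - rec_index a k)"
proof (unfold mono_iff_le_Suc, intro allI)
  fix k
  show "k - rec_index a k \<le> Suc k - rec_index a (Suc k)"
  proof (cases "k = 0")
    case False
    then have "1 \<le> k" by simp
    then show ?thesis using rec_index_Suc_le[OF assms] rec_index_bounds(2)[OF assms] by fastforce
  qed simp
qed

lemma P_linear_growth:
  assumes "1 \<le> a" "1 \<le> j" "j \<le> i"
  shows "(a + real (i - j)) * real (P a j) \<le> a * real (P a i)"
  using \<open>j \<le> i\<close>
proof (induction i rule: dec_induct)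
  case (step i)
  have "1 \<le> i" using step.hyps \<open>1 \<le> j\<close> by simp
  have "real (P a j) \<le> real (P a i)" using step.hyps by (simp add: monoD[OF mono_P])
  also have "\<dots> \<le> a * real (P a (rec_index a i))"
    using is_rec_index_rec_index[OF \<open>1 \<le> a\<close> \<open>1 \<le> i\<close>] by (simp add: is_rec_index_def)
  finally show ?case
    using step.IH step.hyps P_Suc[OF \<open>1 \<le> a\<close> \<open>1 \<le> i\<close>] by (simp add: Suc_diff_le algebra_simps)
qed simp

lemma lag_le:
  assumes "1 \<le> a" "1 \<le> k"
  shows "real (k - rec_index a k) \<le> a * a"
proof -
  let ?j = "rec_index a k"
  have "(a + real (k - ?j)) * real (P a ?j) \<le> a * real (P a k)"
    using P_linear_growth[OF \<open>1 \<le> a\<close> rec_index_bounds[OF assms]] .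
  also have "\<dots> \<le> a * (a * real (P a ?j))"
    using is_rec_index_rec_index[OF assms] \<open>1 \<le> a\<close> by (simp add: is_rec_index_def)
  finally have "a + real (k - ?j) \<le> a * a"
    using P_pos[OF rec_index_bounds(1)[OF assms], of a] by (simp add: mult.assoc)
  then show ?thesis using \<open>1 \<le> a\<close> by simp
qed

lemma mono_bounded_nat_eventually_const:
  fixes f :: "nat \<Rightarrow> nat"
  assumes "mono f" "\<And>n. f n \<le> B"
  shows "\<exists>N. \<forall>n\<ge>N. f n = f N"
proof -
  have "range f \<subseteq> {..B}" using assms(2) by auto
  then have fin: "finite (range f)" by (rule finite_subset) simp
  then have "Max (range f) \<in> range f" by (rule Max_in) simp
  then obtain N where "f N = Max (range f)" by auto
  then have "f n = f N" if "N \<le> n" for n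
    using monoD[OF \<open>mono f\<close> that] Max_ge[OF fin, of "f n"] by simp
  then show ?thesis by blast
qed

lemma eventually_rec_index_Suc:
  assumes "1 \<le> a"
  shows "\<exists>K\<ge>1. \<forall>k\<ge>K. rec_index a (Suc k) = Suc (rec_index a k)"
proof -
  have lag_bound: "k - rec_index a k \<le> nat \<lceil>a * a\<rceil>" for k
  proof (cases "k = 0")
    case False
    then have "real (k - rec_index a k) \<le> real (nat \<lceil>a * a\<rceil>)"
      by (intro order_trans[OF lag_le[OF assms] real_nat_ceiling_ge]) simp
    then show ?thesis by (simp only: of_nat_le_iff)
  qed simp
  obtain N where N: "\<forall>n\<ge>N. n - rec_index a n = N - rec_index a N"
    using mono_bounded_nat_eventually_const[OF mono_lag[OF assms] lag_bound] by blast
  have "rec_index a (Suc k) = Suc (rec_index a k)" if "Suc N \<le> k" for k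
  proof -
    have "Suc k - rec_index a (Suc k) = k - rec_index a k"
      using N[rule_format, of k] N[rule_format, of "Suc k"] that by simp
    moreover have "rec_index a k \<le> k" "rec_index a (Suc k) \<le> Suc k"
      using that rec_index_bounds(2)[OF assms] by simp_all
    ultimately show ?thesis by linarith
  qed
  then show ?thesis by (intro exI[of _ "Suc N"]) simp
qed

lemma additive_recurrence_ratio_lower_bound:
  fixes f g :: "nat \<Rightarrow> real" and r :: "nat \<Rightarrow> nat"
  assumes f_pos: "\<And>k. 1 \<le> k \<Longrightarrow> 0 < f k" and g_pos: "\<And>k. 1 \<le> k \<Longrightarrow> 0 < g k"
    and "1 \<le> K"
    and rec: "\<And>k. K \<le> k \<Longrightarrow>
      1 \<le> r k \<and> r k \<le> k \<and> f (Suc k) = f k + f (r k) \<and> g (Suc k) = g k + g (r k)"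
  shows "\<exists>c>0. \<forall>k\<ge>1. c * g k \<le> f k"
proof -
  \<comment> \<open>the extra element \<open>1\<close> only keeps the set nonempty\<close>
  define c where "c = Min (insert 1 ((\<lambda>k. f k / g k) ` {1..K}))"
  have "c > 0" unfolding c_def using f_pos g_pos by (subst Min_gr_iff) auto
  have "c * g k \<le> f k" if "1 \<le> k" for k
    using that
  proof (induction k rule: less_induct)
    case (less k)
    show ?case
    proof (cases "k \<le> K")
      case True
      then have "c \<le> f k / g k" unfolding c_def using less.prems by (intro Min_le) auto
      then show ?thesis using g_pos[OF less.prems] by (simp add: field_simps)
    next
      case False
      then obtain m where m: "k = Suc m" "K \<le> m" by (cases k) auto
      with rec[OF \<open>K \<le> m\<close>] \<open>1 \<le> K\<close> less.IH[of m] less.IH[of "r m"]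
      show ?thesis by (simp add: distrib_left)
    qed
  qed
  with \<open>c > 0\<close> show ?thesis by blast
qed

definition slack :: "real \<Rightarrow> nat \<Rightarrow> real" where
  "slack a k = a * real (P a (rec_index a k)) - real (P a k)"

lemma slack_pos:
  assumes "1 \<le> a" "a \<notin> \<rat>" "1 \<le> k"
  shows "0 < slack a k"
proof -
  have le: "real (P a k) \<le> a * real (P a (rec_index a k))"
    using is_rec_index_rec_index[OF \<open>1 \<le> a\<close> \<open>1 \<le> k\<close>] by (simp add: is_rec_index_def)
  have pos: "0 < P a (rec_index a k)"
    using P_pos[OF rec_index_bounds(1)[OF \<open>1 \<le> a\<close> \<open>1 \<le> k\<close>]] .
  have "a * real (P a (rec_index a k)) \<noteq> real (P a k)"
  proof
    assume "a * real (P a (rec_index a k)) = real (P a k)"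
    then have "a = real (P a k) / real (P a (rec_index a k))" using pos by (simp add: field_simps)
    moreover have "real (P a k) / real (P a (rec_index a k)) \<in> \<rat>" by (intro Rats_divide Rats_of_nat)
    ultimately show False using \<open>a \<notin> \<rat>\<close> by simp
  qed
  with le show ?thesis unfolding slack_def by simp
qed

lemma slack_lower_bound:
  assumes "1 \<le> a" "a \<notin> \<rat>"
  shows "\<exists>c>0. \<forall>k\<ge>1. c * real (P a (rec_index a k)) \<le> slack a k"
proof -
  obtain K where "1 \<le> K" and K: "\<And>k. K \<le> k \<Longrightarrow> rec_index a (Suc k) = Suc (rec_index a k)"
    using eventually_rec_index_Suc[OF \<open>1 \<le> a\<close>] by blast
  have "1 \<le> rec_index a k \<and> rec_index a k \<le> k
    \<and> slack a (Suc k) = slack a k + slack a (rec_index a k)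
    \<and> real (P a (rec_index a (Suc k))) = real (P a (rec_index a k)) + real (P a (rec_index a (rec_index a k)))"
    if "K \<le> k" for k
  proof -
    have "1 \<le> k" using \<open>1 \<le> K\<close> that by simp
    have j: "1 \<le> rec_index a k" "rec_index a k \<le> k" using rec_index_bounds[OF \<open>1 \<le> a\<close> \<open>1 \<le> k\<close>] .
    show ?thesis
      using j P_Suc[OF \<open>1 \<le> a\<close> \<open>1 \<le> k\<close>] P_Suc[OF \<open>1 \<le> a\<close> j(1)] K[OF that]
      by (simp add: slack_def algebra_simps)
  qed
  moreover have "0 < real (P a (rec_index a k))" if "1 \<le> k" for k
    using P_pos[OF rec_index_bounds(1)[OF \<open>1 \<le> a\<close> that]] by simp
  ultimately show ?thesis
    using slack_pos[OF assms] \<open>1 \<le> K\<close>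
    by (intro additive_recurrence_ratio_lower_bound[where r = "rec_index a"]) auto
qed

lemma P_eq_if_common_rec_index:
  assumes "0 \<le> a" "0 \<le> b"
    and common: "\<And>k. 1 \<le> k \<Longrightarrow> \<exists>j. is_rec_index a (P a) k j \<and> is_rec_index b (P a) k j"
  shows "P b = P a"
proof
  fix n
  show "P b n = P a n"
  proof (induction n rule: less_induct)
    case (less n)
    show ?case
    proof (cases "n \<le> 1")
      case True
      then consider "n = 0" | "n = 1" by linarith
      then show ?thesis by cases (simp_all only: P_0 P_1)
    next
      case False
      then obtain k where n: "n = Suc k" and "1 \<le> k" by (cases n) auto
      obtain j where ja: "is_rec_index a (P a) k j" and jb: "is_rec_index b (P a) k j"
        using common[OF \<open>1 \<le> k\<close>] by blast
      have IH: "P b i = P a i" if "i \<le> k" for i using less.IH[of i] that n by simp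
      have "is_rec_index b (P b) k j" using jb is_rec_index_cong[where p = "P b" and q = "P a", OF IH] by blast
      then have "P b n = P b k + P b j" using P_Suc_if_is_rec_index \<open>0 \<le> b\<close> n by simp
      also have "\<dots> = P a k + P a j"
        using IH[of k] IH[of j] ja by (simp add: is_rec_index_def)
      also have "\<dots> = P a n" using P_Suc_if_is_rec_index[OF \<open>0 \<le> a\<close> ja] n by simp
      finally show ?thesis .
    qed
  qed
qed

theorem mainTheorem8:
  fixes a :: real
  assumes "cutoff a"
  shows "a \<in> \<rat>"
proof (rule ccontr)
  assume "a \<notin> \<rat>"
  have "1 \<le> a" and below: "\<And>b. 1 \<le> b \<Longrightarrow> b < a \<Longrightarrow> P a \<noteq> P b"
    using assms unfolding cutoff_def by auto
  obtain c where "c > 0" and c: "\<And>k. 1 \<le> k \<Longrightarrow> c * real (P a (rec_index a k)) \<le> slack a k"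
    using slack_lower_bound[OF \<open>1 \<le> a\<close> \<open>a \<notin> \<rat>\<close>] by blast
  define b where "b = max 1 (a - c)"
  have "a \<noteq> 1" using \<open>a \<notin> \<rat>\<close> by auto
  then have "1 \<le> b" "b < a" using \<open>1 \<le> a\<close> \<open>c > 0\<close> by (auto simp: b_def)
  have "is_rec_index a (P a) k (rec_index a k) \<and> is_rec_index b (P a) k (rec_index a k)"
    if "1 \<le> k" for k
  proof
    show ja: "is_rec_index a (P a) k (rec_index a k)" using is_rec_index_rec_index[OF \<open>1 \<le> a\<close> that] .
    have "real (P a k) \<le> (a - c) * real (P a (rec_index a k))"
      using c[OF that] by (simp add: slack_def algebra_simps)
    also have "\<dots> \<le> b * real (P a (rec_index a k))" by (simp add: b_def mult_right_mono)
    finally show "is_rec_index b (P a) k (rec_index a k)"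
      using is_rec_index_le_param[OF ja] \<open>b < a\<close> by simp
  qed
  then have "P b = P a" using \<open>1 \<le> a\<close> \<open>1 \<le> b\<close> by (intro P_eq_if_common_rec_index) auto
  with below[OF \<open>1 \<le> b\<close> \<open>b < a\<close>] show False by simp
qed

end
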